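(* For every closed subset $C\subseteq A$ and every $m\in\omega$, every $g\in\mathcal{G}_m$ that fixes $C\cap A_m$ pointwise extends to a permutation $\pi\in\mathcal{G}$ that fixes $C$ pointwise.
   Context: Let $\langle P,\preccurlyeq,\preccurlyeq^\ast\rangle$ be a doubly ordered set: $\preccurlyeq$ a partial order on $P$, $\preccurlyeq^\ast$ a preorder on $P$, and $p\preccurlyeq q\Rightarrow p\preccurlyeq^\ast q$. Write $p\prec q$ for ($p\preccurlyeq q$ and $p\neq q$). For a quadruple $\langle x_0,x_1,x_2,x_3\rangle$ and $i<4$, $\mathrm{pr}_i(\langle x_0,x_1,x_2,x_3\rangle)=x_i$. For a set $S$, $\mathscr{S}(S)$ is the set of permutations of $S$. Define recursively $A_0=\{\langle0,p,\varnothing,k\rangle\mid p\in P,k\in\omega\}$ and $A_{n+1}=A_n\cup\{\langle n+1,q,a,0\rangle\mid q\in P,a\in A_n,\mathrm{pr}_1(a)\prec q\}\cup\{\langle n+1,q,a,k\rangle\mid q\in P,a\in A_n,\mathrm{pr}_1(a)\not\preccurlyeq q,\mathrm{pr}_1(a)\preccurlyeq^\ast q,k\in\omega\}$; let $A=\bigcup_{n}A_n$. Define $\mathcal{G}_0=\{f\in\mathscr{S}(A_0)\mid \mathrm{pr}_1(f(a))=\mathrm{pr}_1(a)\text{ for all }a\in A_0\}$; for $f\in\mathscr{S}(A_{n+1})$, $f\in\mathcal{G}_{n+1}$ iff $f{\upharpoonright}A_n\in\mathcal{G}_n$ and for all $b\in A_{n+1}\setminus A_n$, $\mathrm{pr}_1(f(b))=\mathrm{pr}_1(b)$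 and $\mathrm{pr}_2(f(b))=f(\mathrm{pr}_2(b))$. Let $\mathcal{G}=\{\pi\in\mathscr{S}(A)\mid \pi{\upharpoonright}A_n\in\mathcal{G}_n\text{ for all }n\}$. A subset $C\subseteq A$ is closed if (i) for all $n\in\omega$, all $a\in C\cap A_n$ and all $q\in P$ with $\mathrm{pr}_1(a)\prec q$, we have $\langle n+1,q,a,0\rangle\in C$, and (ii) for all $b\in C\setminus A_0$, $\mathrm{pr}_2(b)\in C$. *)

theory Defs
  imports Main
begin

text \<open>Set-theoretic quadruples <n,p,a,k>; the third component is either the
empty set (Emp) or another quadruple.\<close>
datatype 'p quad = Emp | Q (pr0: nat) (pr1: 'p) (pr2: "'p quad") (pr3: nat)

definition sprec :: "'p rel \<Rightarrow> 'p \<Rightarrow> 'p \<Rightarrow> bool" where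
  "sprec le p q \<longleftrightarrow> (p, q) \<in> le \<and> p \<noteq> q"

fun An :: "'p set \<Rightarrow> 'p rel \<Rightarrow> 'p rel \<Rightarrow> nat \<Rightarrow> 'p quad set" where
  "An P le les 0 = {Q 0 p Emp k | p k. p \<in> P}"
| "An P le les (Suc n) = An P le les n
     \<union> {Q (Suc n) q a 0 | q a. q \<in> P \<and> a \<in> An P le les n \<and> sprec le (pr1 a) q}
     \<union> {Q (Suc n) q a k | q a k. q \<in> P \<and> a \<in> An P le les n \<and>
            (pr1 a, q) \<notin> le \<and> (pr1 a, q) \<in> les}"

definition Aall :: "'p set \<Rightarrow> 'p rel \<Rightarrow> 'p rel \<Rightarrow> 'p quad set" where
  "Aall P le les = (\<Union>n. An P le les n)"

text \<open>A function f represents a permutation of A_n via its restriction to A_n.\<close>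
fun Gn :: "'p set \<Rightarrow> 'p rel \<Rightarrow> 'p rel \<Rightarrow> nat \<Rightarrow> ('p quad \<Rightarrow> 'p quad) set" where
  "Gn P le les 0 = {f. bij_betw f (An P le les 0) (An P le les 0) \<and>
       (\<forall>a\<in>An P le les 0. pr1 (f a) = pr1 a)}"
| "Gn P le les (Suc n) = {f. bij_betw f (An P le les (Suc n)) (An P le les (Suc n)) \<and>
       f \<in> Gn P le les n \<and>
       (\<forall>b\<in>An P le les (Suc n) - An P le les n.
           pr1 (f b) = pr1 b \<and> pr2 (f b) = f (pr2 b))}"

definition Gall :: "'p set \<Rightarrow> 'p rel \<Rightarrow> 'p rel \<Rightarrow> ('p quad \<Rightarrow> 'p quad) set" where
  "Gall P le les = {\<pi>. bij_betw \<pi> (Aall P le les) (Aall P le les) \<and>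
       (\<forall>n. \<pi> \<in> Gn P le les n)}"

definition closed_set :: "'p set \<Rightarrow> 'p rel \<Rightarrow> 'p rel \<Rightarrow> 'p quad set \<Rightarrow> bool" where
  "closed_set P le les C \<longleftrightarrow> C \<subseteq> Aall P le les \<and>
     (\<forall>n. \<forall>a\<in>C \<inter> An P le les n. \<forall>q\<in>P. sprec le (pr1 a) q \<longrightarrow> Q (Suc n) q a 0 \<in> C) \<and>
     (\<forall>b\<in>C - An P le les 0. pr2 b \<in> C)"

end

theory Submission
  imports Defs
begin

text \<open>Above level m the extension is forced by the condition
  pr2 (\<pi> b) = \<pi> (pr2 b): \<pi> keeps the new quadruple Q j q a k and acts
  recursively on its second component a, down to level m, where it is g.
  Whether Q (n+1) q a k lies in A(n+1) depends on a \<in> A(n) only through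
  pr1 a, which elements of G(n) preserve; hence this map permutes every
  A(n+1) - A(n) and lies in every G(n). A closed set contains pr2 of each
  of its elements above level 0, so structural induction shows that the
  extension fixes C as soon as g fixes C \<inter> A(m).\<close>

lemma mem_AnD: "x \<in> An P le les n \<Longrightarrow> x \<noteq> Emp \<and> pr0 x \<le> n"
  by (induction n arbitrary: x) (auto, use le_SucI in blast)

lemma An_mono: "k \<le> n \<Longrightarrow> An P le les k \<subseteq> An P le les n"
  by (rule lift_Suc_mono_le[where f = "An P le les"]) auto

lemma Q_Suc_notin_An: "Q (Suc n) q a k \<notin> An P le les n"
  using mem_AnD by fastforce

lemma An_Suc_diffE:
  assumes "x \<in> An P le les (Suc n) - An P le les n"
  obtains q a k where "x = Q (Suc n) q a k" "a \<in> An P le les n"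
  using assms by auto

lemma mem_An_if_pr0_le:
  assumes "x \<in> An P le les i" "pr0 x \<le> n"
  shows "x \<in> An P le les n"
  using assms
proof (induction i)
  case 0
  then show ?case using An_mono[of 0 n P le les] by blast
next
  case (Suc i)
  show ?case
  proof (cases "x \<in> An P le les i")
    case True
    then show ?thesis using Suc by blast
  next
    case False
    then obtain q a k where "x = Q (Suc i) q a k"
      using Suc.prems(1) False by (meson DiffI An_Suc_diffE)
    then have "Suc i \<le> n" using Suc.prems(2) by simp
    then show ?thesis using Suc.prems(1) An_mono by blast
  qed
qed

lemma Q_Suc_in_An_Suc_cong:
  assumes "a \<in> An P le les n" "a' \<in> An P le les n" "pr1 a = pr1 a'"
  shows "Q (Suc n) q a k \<in> An P le les (Suc n) \<longleftrightarrow> Q (Suc n) q a' k \<in> An P le les (Suc n)"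
  using assms Q_Suc_notin_An[of n q _ k P le les] by auto

lemma Gn_mono: "k \<le> n \<Longrightarrow> f \<in> Gn P le les n \<Longrightarrow> f \<in> Gn P le les k"
  by (induction n rule: dec_induct) auto

lemma Gn_bij: "f \<in> Gn P le les n \<Longrightarrow> bij_betw f (An P le les n) (An P le les n)"
  by (cases n) auto

lemma Gn_pr1: "f \<in> Gn P le les n \<Longrightarrow> x \<in> An P le les n \<Longrightarrow> pr1 (f x) = pr1 x"
  by (induction n) (auto simp del: An.simps simp: An.simps(1))

lemma Gn_cong:
  assumes "f \<in> Gn P le les n" "\<And>x. x \<in> An P le les n \<Longrightarrow> h x = f x"
  shows "h \<in> Gn P le les n"
  using assms
proof (induction n)
  case 0
  have "bij_betw h (An P le les 0) (An P le les 0)"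
    using Gn_bij[OF 0(1)] bij_betw_cong[of _ h f] 0(2) by blast
  moreover have "pr1 (h a) = pr1 a" if "a \<in> An P le les 0" for a
    using that 0(2) Gn_pr1[OF 0(1)] by metis
  ultimately show ?case by (simp only: Gn.simps(1) mem_Collect_eq) blast
next
  case (Suc n)
  let ?A = "An P le les n" and ?B = "An P le les (Suc n)"
  have f: "bij_betw f ?B ?B" "f \<in> Gn P le les n"
    "\<forall>b\<in>?B - ?A. pr1 (f b) = pr1 b \<and> pr2 (f b) = f (pr2 b)"
    using Suc.prems(1) unfolding Gn.simps(2) mem_Collect_eq by blast+
  have "?A \<subseteq> ?B" by (rule An_mono) simp
  then have "h \<in> Gn P le les n" using Suc.IH[OF f(2)] Suc.prems(2) by blast
  moreover have "bij_betw h ?B ?B"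
    using f(1) bij_betw_cong[of ?B h f ?B] Suc.prems(2) by blast
  moreover have "pr1 (h b) = pr1 b \<and> pr2 (h b) = h (pr2 b)" if b: "b \<in> ?B - ?A" for b
  proof -
    from b obtain q a k where b_eq: "b = Q (Suc n) q a k" and a: "a \<in> ?A"
      by (rule An_Suc_diffE)
    have "h b = f b" "h a = f a" using b a \<open>?A \<subseteq> ?B\<close> Suc.prems(2) by auto
    moreover have "pr1 (f b) = pr1 b \<and> pr2 (f b) = f (pr2 b)" using f(3) b by blast
    ultimately show ?thesis by (simp add: b_eq)
  qed
  ultimately show ?case by (simp only: Gn.simps(2) mem_Collect_eq) blast
qed

lemma Gn_SucI:
  assumes f: "f \<in> Gn P le les n"
    and f_Suc: "\<And>q a k. a \<in> An P le les n \<Longrightarrow> f (Q (Suc n) q a k) = Q (Suc n) q (f a) k"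
  shows "f \<in> Gn P le les (Suc n)"
proof -
  let ?A = "An P le les n" and ?B = "An P le les (Suc n)"
  have bij_A: "bij_betw f ?A ?A" by (rule Gn_bij[OF f])
  have new_iff: "Q (Suc n) q (f a) k \<in> ?B - ?A \<longleftrightarrow> Q (Suc n) q a k \<in> ?B - ?A"
    if a: "a \<in> ?A" for q a k
  proof -
    have "f a \<in> ?A" using a bij_betwE[OF bij_A] by blast
    then show ?thesis
      using Q_Suc_in_An_Suc_cong[OF _ a Gn_pr1[OF f a]] by (simp add: Q_Suc_notin_An)
  qed
  have bij_new: "bij_betw f (?B - ?A) (?B - ?A)"
  proof (rule bij_betw_imageI)
    show "inj_on f (?B - ?A)"
    proof (rule inj_onI)
      fix x y assume x: "x \<in> ?B - ?A" and y: "y \<in> ?B - ?A" and "f x = f y"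
      from x obtain q a k where x_eq: "x = Q (Suc n) q a k" and a: "a \<in> ?A"
        by (rule An_Suc_diffE)
      from y obtain q' a' k' where y_eq: "y = Q (Suc n) q' a' k'" and a': "a' \<in> ?A"
        by (rule An_Suc_diffE)
      have "q = q'" "f a = f a'" "k = k'"
        using \<open>f x = f y\<close> a a' by (simp_all add: x_eq y_eq f_Suc)
      moreover have "a = a'"
        using \<open>f a = f a'\<close> a a' bij_A by (auto simp: bij_betw_def inj_on_def)
      ultimately show "x = y" by (simp add: x_eq y_eq)
    qed
    show "f ` (?B - ?A) = ?B - ?A"
    proof
      show "f ` (?B - ?A) \<subseteq> ?B - ?A"
      proof
        fix y assume "y \<in> f ` (?B - ?A)"
        then obtain x where x: "x \<in> ?B - ?A" and y_eq: "y = f x" by blast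
        from x obtain q a k where x_eq: "x = Q (Suc n) q a k" and a: "a \<in> ?A"
          by (rule An_Suc_diffE)
        have "y = Q (Suc n) q (f a) k" using y_eq x_eq f_Suc[OF a] by (simp only:)
        then show "y \<in> ?B - ?A" using x x_eq new_iff[OF a] by (simp only:)
      qed
    next
      show "?B - ?A \<subseteq> f ` (?B - ?A)"
      proof
        fix y assume y: "y \<in> ?B - ?A"
        then obtain q a' k where y_eq: "y = Q (Suc n) q a' k" and "a' \<in> ?A"
          by (rule An_Suc_diffE)
        then obtain a where a: "a \<in> ?A" and "a' = f a"
          using bij_A unfolding bij_betw_def by blast
        then have "y = f (Q (Suc n) q a k)" and "Q (Suc n) q a k \<in> ?B - ?A"
          using y y_eq new_iff[OF a] f_Suc[OF a] by (simp_all only:)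
        then show "y \<in> f ` (?B - ?A)" by (rule image_eqI)
      qed
    qed
  qed
  have "?A \<subseteq> ?B" by (rule An_mono) simp
  then have "?A \<union> (?B - ?A) = ?B" by blast
  then have "bij_betw f ?B ?B"
    using bij_betw_combine[OF bij_A bij_new Diff_disjoint] by (simp only:)
  moreover have "pr1 (f b) = pr1 b \<and> pr2 (f b) = f (pr2 b)" if "b \<in> ?B - ?A" for b
    using that by (elim An_Suc_diffE) (simp add: f_Suc)
  ultimately show ?thesis
    using f by (simp only: Gn.simps(2) mem_Collect_eq) blast
qed

lemma An_chain: "An P le les i \<subseteq> An P le les j \<or> An P le les j \<subseteq> An P le les i"
  using nat_le_linear[of i j] An_mono by blast

lemma Gall_iff: "f \<in> Gall P le les \<longleftrightarrow> (\<forall>n. f \<in> Gn P le les n)"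
  unfolding Gall_def Aall_def
  using bij_betw_UNION_chain[of UNIV "An P le les" f "An P le les"] An_chain Gn_bij by blast

primrec extend_above :: "('p quad \<Rightarrow> 'p quad) \<Rightarrow> nat \<Rightarrow> 'p quad \<Rightarrow> 'p quad" where
  "extend_above g m Emp = g Emp"
| "extend_above g m (Q j q a k) = (if j \<le> m then g (Q j q a k) else Q j q (extend_above g m a) k)"

lemma extend_above_eq:
  assumes "x \<in> An P le les m"
  shows "extend_above g m x = g x"
  using mem_AnD[OF assms] by (cases x) auto

lemma extend_above_in_Gn:
  assumes g: "g \<in> Gn P le les m"
  shows "extend_above g m \<in> Gn P le les n"
proof (induction n)
  case 0
  show ?case
    using Gn_cong[OF Gn_mono[OF _ g]] extend_above_eq An_mono[of 0 m P le les] by blast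
next
  case (Suc n)
  show ?case
  proof (cases "Suc n \<le> m")
    case True
    then show ?thesis
      using Gn_cong[OF Gn_mono[OF True g]] extend_above_eq An_mono[OF True] by blast
  next
    case False
    then show ?thesis using Suc.IH by (intro Gn_SucI) simp_all
  qed
qed

lemma extend_above_fixes_closed:
  assumes C: "closed_set P le les C" and g_fixes: "\<forall>a\<in>C \<inter> An P le les m. g a = a"
    and "c \<in> C"
  shows "extend_above g m c = c"
  using \<open>c \<in> C\<close>
proof (induction c)
  case Emp
  then show ?case using C mem_AnD by (fastforce simp: closed_set_def Aall_def)
next
  case (Q j q a k)
  obtain i where i: "Q j q a k \<in> An P le les i"
    using Q.prems C by (auto simp: closed_set_def Aall_def)
  show ?case
  proof (cases "j \<le> m")
    case True
    then have "Q j q a k \<in> An P le les m" using mem_An_if_pr0_le[OF i] by simp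
    then show ?thesis using extend_above_eq[of "Q j q a k"] g_fixes Q.prems by simp
  next
    case False
    then have "Q j q a k \<notin> An P le les 0" using mem_AnD by fastforce
    then have "a \<in> C" using Q.prems C by (force simp: closed_set_def)
    then show ?thesis using Q.IH False by simp
  qed
qed

theorem lemma2p3:
  fixes P :: "'p set" and le les :: "'p rel" and C :: "'p quad set" and m :: nat
    and g :: "'p quad \<Rightarrow> 'p quad"
  assumes "le \<subseteq> P \<times> P" and "partial_order_on P le"
    and "les \<subseteq> P \<times> P" and "preorder_on P les"
    and "le \<subseteq> les"
    and "closed_set P le les C"
    and "g \<in> Gn P le les m"
    and "\<forall>a\<in>C \<inter> An P le les m. g a = a"
  shows "\<exists>\<pi>\<in>Gall P le les. (\<forall>a\<in>An P le les m. \<pi> a = g a) \<and> (\<forall>c\<in>C. \<pi> c = c)"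
proof (intro bexI conjI ballI)
  show "extend_above g m \<in> Gall P le les"
    using extend_above_in_Gn[OF assms(7)] by (simp add: Gall_iff)
  show "extend_above g m a = g a" if "a \<in> An P le les m" for a
    using that by (rule extend_above_eq)
  show "extend_above g m c = c" if "c \<in> C" for c
    using extend_above_fixes_closed[OF assms(6,8) that] .
qed

end
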